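(* Let $N\ge 4$ be an integer. Suppose $w\in C^2([0,\infty))$ satisfies $$-w''(t)+(N-2)w'(t)+(N-1)w(t)=\frac{N-1}{2}\,e^{-t}\,w(t)^2\qquad\text{for all }t\ge 0,$$ together with $w'(0)-(N-1)w(0)=0$ and $\lim_{t\to+\infty}w(t)=0$. Then $w\equiv 0$.
   Context: This is the radial Navier problem (after the substitutions $v=u'$, $w(t)=-v(e^{-t})$) for $\Delta^2u=S_2[u]$ in the unit ball of $\mathbb{R}^N$ with $u=\Delta u=0$ on the boundary, where $S_2[u]$ is the sum of the $2\times2$ principal minors of the Hessian matrix of $u$; this is the case $k=2$, $\lambda=0$. *)

theory Defs
  imports "HOL-Analysis.Analysis"
begin

end

theory Submission
  imports Defs
begin

text \<open>
  Put \<open>c = (n - 1) / 2\<close> and \<open>y = (n - 1) w - w'\<close>. The equation says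
  \<open>(exp t * y)' = c w\<^sup>2\<close>, so the boundary condition \<open>y 0 = 0\<close> gives \<open>y \<ge> 0\<close>.
  Hence \<open>exp (-(n - 1) t) * w\<close> is nonincreasing with limit \<open>0\<close>, so \<open>w \<ge> 0\<close>, and
  \<open>w \<equiv> 0\<close> as soon as \<open>w 0 = 0\<close>.
  In the variables \<open>W = exp (-t) * w\<close> and \<open>J = exp (-t) * y / c\<close> the equation becomes
  the planar system \<open>W' = (n - 2) W - c J\<close>, \<open>J' = W\<^sup>2 - 2 J\<close>, which for \<open>n = 4\<close> has
  the first integral \<open>F = n W J / 2 - c J\<^sup>2 / 2 - W\<^sup>3 / 3\<close>. For \<open>n \<ge> 4\<close> the weighted
  \<open>\<Phi> = exp (-(n - 4) t) * F\<close> satisfies \<open>\<Phi>' = -(n - 4) / 6 * exp (-(n - 4) t) * W\<^sup>3 \<le> 0\<close>,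
  and \<open>\<Phi> \<rightarrow> 0\<close> because \<open>W, J \<rightarrow> 0\<close>; so \<open>-w(0)\<^sup>3 / 3 = \<Phi>(0) \<ge> 0\<close>, i.e. \<open>w 0 = 0\<close>.
\<close>

lemma has_real_derivative_nonpos_imp_antitone:
  fixes f f' :: "real \<Rightarrow> real"
  assumes deriv: "\<And>x. a \<le> x \<Longrightarrow> (f has_real_derivative f' x) (at x within {a..})"
    and nonpos: "\<And>x. a \<le> x \<Longrightarrow> f' x \<le> 0"
    and "a \<le> s" "s \<le> t"
  shows "f t \<le> f s"
proof -
  have "(f has_derivative (\<lambda>h. f' x * h)) (at x within {s..t})" if "s \<le> x" "x \<le> t" for x
    using has_field_derivative_subset[OF deriv] that \<open>a \<le> s\<close>
    by (auto simp: has_field_derivative_def)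
  from mvt_very_simple[OF \<open>s \<le> t\<close> this]
  obtain x where "x \<in> {s..t}" "f t - f s = f' x * (t - s)"
    by blast
  moreover have "f' x * (t - s) \<le> 0"
    using nonpos[of x] \<open>x \<in> {s..t}\<close> \<open>a \<le> s\<close> \<open>s \<le> t\<close> by (simp add: mult_nonpos_nonneg)
  ultimately show ?thesis
    by linarith
qed

lemma has_real_derivative_nonneg_imp_mono:
  fixes f f' :: "real \<Rightarrow> real"
  assumes "\<And>x. a \<le> x \<Longrightarrow> (f has_real_derivative f' x) (at x within {a..})"
    and "\<And>x. a \<le> x \<Longrightarrow> 0 \<le> f' x"
    and "a \<le> s" "s \<le> t"
  shows "f s \<le> f t"
  using has_real_derivative_nonpos_imp_antitone[where f = "\<lambda>x. - f x" and f' = "\<lambda>x. - f' x"] assms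
  by (auto intro!: derivative_eq_intros)

lemma antitone_tendsto_at_top_le:
  fixes f :: "real \<Rightarrow> real"
  assumes antitone: "\<And>s t. a \<le> s \<Longrightarrow> s \<le> t \<Longrightarrow> f t \<le> f s"
    and lim: "(f \<longlongrightarrow> L) at_top" and "a \<le> s"
  shows "L \<le> f s"
proof (rule tendsto_le[OF trivial_limit_at_top_linorder tendsto_const lim])
  show "\<forall>\<^sub>F t in at_top. f t \<le> f s"
    using eventually_ge_at_top[of s] by eventually_elim (use antitone \<open>a \<le> s\<close> in auto)
qed

lemma tendsto_at_top_imp_bounded_atLeast:
  fixes f :: "real \<Rightarrow> real"
  assumes cont: "continuous_on {a..} f" and lim: "(f \<longlongrightarrow> L) at_top"
  obtains B where "\<And>t. a \<le> t \<Longrightarrow> \<bar>f t\<bar> \<le> B"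
proof -
  obtain T where T: "\<And>t. T \<le> t \<Longrightarrow> \<bar>f t - L\<bar> < 1"
    using lim[unfolded tendsto_iff, rule_format, of 1]
    by (auto simp: eventually_at_top_linorder dist_real_def)
  have "compact (f ` {a..T})"
    by (intro compact_continuous_image continuous_on_subset[OF cont]) auto
  then obtain B0 where B0: "\<And>t. t \<in> {a..T} \<Longrightarrow> \<bar>f t\<bar> \<le> B0"
    by (metis compact_imp_bounded bounded_iff image_eqI real_norm_def)
  show ?thesis
  proof
    fix t assume "a \<le> t"
    then show "\<bar>f t\<bar> \<le> max B0 (\<bar>L\<bar> + 1)"
      using B0[of t] T[of t] by (cases "t \<le> T") auto
  qed
qed

lemma tendsto_exp_neg_mult_at_top:
  fixes a :: real
  assumes "0 < a"
  shows "((\<lambda>t. exp (- (a * t))) \<longlongrightarrow> 0) at_top"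
proof -
  have "filterlim (\<lambda>t. - (a * t)) at_bot at_top"
    using filterlim_tendsto_pos_mult_at_top[OF tendsto_const assms filterlim_ident]
    by (simp add: filterlim_uminus_at_bot)
  then show ?thesis
    by (rule filterlim_compose[OF exp_at_bot])
qed

lemma tendsto_exp_neg_at_top: "((\<lambda>t::real. exp (- t)) \<longlongrightarrow> 0) at_top"
  using tendsto_exp_neg_mult_at_top[of 1] by simp

locale radial_navier =
  fixes n :: real and w w' w'' :: "real \<Rightarrow> real"
  assumes n_ge_4: "4 \<le> n"
    and w_deriv: "\<And>t. 0 \<le> t \<Longrightarrow> (w has_real_derivative w' t) (at t within {0..})"
    and w'_deriv: "\<And>t. 0 \<le> t \<Longrightarrow> (w' has_real_derivative w'' t) (at t within {0..})"
    and ode: "\<And>t. 0 \<le> t \<Longrightarrow> w'' t = (n - 2) * w' t + (n - 1) * w t - (n - 1) / 2 * exp (- t) * (w t)\<^sup>2"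
    and robin_boundary: "w' 0 = (n - 1) * w 0"
    and w_tendsto: "(w \<longlongrightarrow> 0) at_top"
begin

definition robin :: "real \<Rightarrow> real"
  where "robin t = (n - 1) * w t - w' t"

lemma has_real_derivative_exp_robin:
  assumes "0 \<le> t"
  shows "((\<lambda>t. exp t * robin t) has_real_derivative (n - 1) / 2 * (w t)\<^sup>2) (at t within {0..})"
proof -
  have "((\<lambda>t. exp t * robin t) has_real_derivative
          exp t * robin t + exp t * ((n - 1) * w' t - w'' t)) (at t within {0..})"
    unfolding robin_def by (auto intro!: derivative_eq_intros w_deriv w'_deriv assms)
  moreover have "exp t * robin t + exp t * ((n - 1) * w' t - w'' t) = (n - 1) / 2 * (w t)\<^sup>2"
    using ode[OF assms] by (simp add: robin_def algebra_simps exp_minus field_simps)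
  ultimately show ?thesis
    by simp
qed

lemma robin_nonneg:
  assumes "0 \<le> t"
  shows "0 \<le> robin t"
proof -
  have "exp 0 * robin 0 \<le> exp t * robin t"
    using n_ge_4 assms
    by (intro has_real_derivative_nonneg_imp_mono[OF has_real_derivative_exp_robin]) auto
  then show ?thesis
    using robin_boundary by (simp add: robin_def zero_le_mult_iff)
qed

lemma exp_robin_le:
  assumes bound: "\<And>t. 0 \<le> t \<Longrightarrow> \<bar>w t\<bar> \<le> B" and "0 \<le> t"
  shows "exp t * robin t \<le> (n - 1) / 2 * B\<^sup>2 * t"
proof -
  have "exp t * robin t - (n - 1) / 2 * B\<^sup>2 * t \<le> exp 0 * robin 0 - (n - 1) / 2 * B\<^sup>2 * 0"
  proof (rule has_real_derivative_nonpos_imp_antitone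
      [where f = "\<lambda>x. exp x * robin x - (n - 1) / 2 * B\<^sup>2 * x" and f' = "\<lambda>x. (n - 1) / 2 * (w x)\<^sup>2 - (n - 1) / 2 * B\<^sup>2"])
    fix x :: real assume "0 \<le> x"
    have "((\<lambda>x. (n - 1) / 2 * B\<^sup>2 * x) has_real_derivative (n - 1) / 2 * B\<^sup>2) (at x within {0..})"
      by (auto intro!: derivative_eq_intros)
    then show "((\<lambda>x. exp x * robin x - (n - 1) / 2 * B\<^sup>2 * x) has_real_derivative
            (n - 1) / 2 * (w x)\<^sup>2 - (n - 1) / 2 * B\<^sup>2) (at x within {0..})"
      by (rule DERIV_diff[OF has_real_derivative_exp_robin[OF \<open>0 \<le> x\<close>]])
    have "(w x)\<^sup>2 \<le> B\<^sup>2"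
      using bound[OF \<open>0 \<le> x\<close>] abs_le_square_iff abs_of_nonneg order_trans by fastforce
    then show "(n - 1) / 2 * (w x)\<^sup>2 - (n - 1) / 2 * B\<^sup>2 \<le> 0"
      using n_ge_4 by (simp add: mult_left_mono)
  qed (use \<open>0 \<le> t\<close> in auto)
  then show ?thesis
    using robin_boundary by (simp add: robin_def)
qed

lemma exp_weighted_w_antitone:
  assumes "0 \<le> s" "s \<le> t"
  shows "exp (- ((n - 1) * t)) * w t \<le> exp (- ((n - 1) * s)) * w s"
proof (rule has_real_derivative_nonpos_imp_antitone[OF _ _ assms])
  fix x :: real assume "0 \<le> x"
  have "((\<lambda>t. exp (- ((n - 1) * t)) * w t) has_real_derivative
          exp (- ((n - 1) * x)) * (- ((n - 1) * 1)) * w x + exp (- ((n - 1) * x)) * w' x)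
        (at x within {0..})"
    by (auto intro!: derivative_eq_intros w_deriv \<open>0 \<le> x\<close>)
  then show "((\<lambda>t. exp (- ((n - 1) * t)) * w t) has_real_derivative
                 - (exp (- ((n - 1) * x)) * robin x)) (at x within {0..})"
    by (simp add: robin_def algebra_simps)
  show "- (exp (- ((n - 1) * x)) * robin x) \<le> 0"
    using robin_nonneg[OF \<open>0 \<le> x\<close>] by simp
qed

lemma w_nonneg:
  assumes "0 \<le> t"
  shows "0 \<le> w t"
proof -
  have "((\<lambda>t. exp (- ((n - 1) * t)) * w t) \<longlongrightarrow> 0 * 0) at_top"
    using n_ge_4 by (intro tendsto_mult tendsto_exp_neg_mult_at_top w_tendsto) auto
  then have "0 \<le> exp (- ((n - 1) * t)) * w t"
    using antitone_tendsto_at_top_le[OF exp_weighted_w_antitone _ assms] by simp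
  then show ?thesis
    by (simp add: zero_le_mult_iff)
qed

lemma w_eq_0_if_w_0_eq_0:
  assumes "w 0 = 0" "0 \<le> t"
  shows "w t = 0"
  using exp_weighted_w_antitone[of 0 t] w_nonneg[of t] assms
  by (simp add: mult_le_0_iff)

definition W :: "real \<Rightarrow> real"
  where "W t = exp (- t) * w t"

definition J :: "real \<Rightarrow> real"
  where "J t = exp (- t) * robin t / ((n - 1) / 2)"

lemma has_real_derivative_W:
  assumes "0 \<le> t"
  shows "(W has_real_derivative (n - 2) * W t - (n - 1) / 2 * J t) (at t within {0..})"
proof -
  have "(W has_real_derivative exp (- t) * (- 1) * w t + exp (- t) * w' t) (at t within {0..})"
    unfolding W_def by (auto intro!: derivative_eq_intros w_deriv assms)
  moreover have "(n - 2) * W t - (n - 1) / 2 * J t = exp (- t) * (- 1) * w t + exp (- t) * w' t"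
    using n_ge_4 by (simp add: W_def J_def robin_def field_simps)
  ultimately show ?thesis
    by simp
qed

lemma has_real_derivative_J:
  assumes "0 \<le> t"
  shows "(J has_real_derivative (W t)\<^sup>2 - 2 * J t) (at t within {0..})"
proof -
  have "(J has_real_derivative
          (exp (- t) * (- 1) * robin t + exp (- t) * ((n - 1) * w' t - w'' t)) / ((n - 1) / 2))
        (at t within {0..})"
    using n_ge_4 unfolding J_def robin_def
    by (auto intro!: derivative_eq_intros w_deriv w'_deriv assms)
  moreover have "(exp (- t) * (- 1) * robin t + exp (- t) * ((n - 1) * w' t - w'' t)) / ((n - 1) / 2)
      = (W t)\<^sup>2 - 2 * J t"
    using n_ge_4 unfolding ode[OF assms]
    by (simp add: W_def J_def robin_def field_simps power2_eq_square exp_minus)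
  ultimately show ?thesis
    by simp
qed

lemma J_nonneg:
  assumes "0 \<le> t"
  shows "0 \<le> J t"
  using robin_nonneg[OF assms] n_ge_4 by (simp add: J_def)

lemma J_tendsto: "(J \<longlongrightarrow> 0) at_top"
proof -
  obtain B where B: "\<And>t. 0 \<le> t \<Longrightarrow> \<bar>w t\<bar> \<le> B"
    using tendsto_at_top_imp_bounded_atLeast[OF _ w_tendsto]
      DERIV_continuous_on[OF w_deriv] by (metis atLeast_iff)
  show ?thesis
  proof (rule tendsto_sandwich[of "\<lambda>_. 0" _ _ "\<lambda>t. B\<^sup>2 * exp (- t)"])
    show "\<forall>\<^sub>F t in at_top. 0 \<le> J t"
      using eventually_ge_at_top[of 0]
      by eventually_elim (rule J_nonneg)
    show "\<forall>\<^sub>F t in at_top. J t \<le> B\<^sup>2 * exp (- t)"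
      using eventually_ge_at_top[of 0]
    proof eventually_elim
      case (elim t)
      have "J t = exp (- t) * exp (- t) * (exp t * robin t) / ((n - 1) / 2)"
        by (simp add: J_def exp_minus)
      also have "\<dots> \<le> exp (- t) * exp (- t) * ((n - 1) / 2 * B\<^sup>2 * t) / ((n - 1) / 2)"
        using exp_robin_le[OF B elim] n_ge_4 by (intro divide_right_mono mult_left_mono) auto
      also have "\<dots> = B\<^sup>2 * exp (- t) * (t * exp (- t))"
        using n_ge_4 by simp
      also have "\<dots> \<le> B\<^sup>2 * exp (- t) * 1"
      proof (intro mult_left_mono)
        have "t \<le> exp t"
          using exp_ge_add_one_self[of t] by linarith
        then show "t * exp (- t) \<le> 1"
          by (simp add: exp_minus field_simps)
      qed auto
      finally show ?case
        by simp
    qed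
    show "((\<lambda>t. B\<^sup>2 * exp (- t)) \<longlongrightarrow> 0) at_top"
      using tendsto_mult[OF tendsto_const tendsto_exp_neg_at_top, of "B\<^sup>2"] by simp
  qed auto
qed

definition lyapunov :: "real \<Rightarrow> real"
  where "lyapunov t = exp (- ((n - 4) * t)) *
    (n / 2 * W t * J t - (n - 1) / 4 * (J t)\<^sup>2 - (W t) ^ 3 / 3)"

lemma has_real_derivative_lyapunov:
  assumes "0 \<le> t"
  shows "(lyapunov has_real_derivative - ((n - 4) / 6) * exp (- ((n - 4) * t)) * (W t) ^ 3)
    (at t within {0..})"
proof -
  define a b where "a = W t" and "b = J t"
  define dF where "dF =
    n / 2 * ((n - 2) * a - (n - 1) / 2 * b) * b + n / 2 * a * (a\<^sup>2 - 2 * b)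
    - (n - 1) / 4 * (2 * b * (a\<^sup>2 - 2 * b)) - (3 * a\<^sup>2 * ((n - 2) * a - (n - 1) / 2 * b)) / 3"
  have "(lyapunov has_real_derivative
          exp (- ((n - 4) * t)) * (- ((n - 4) * 1)) * (n / 2 * a * b - (n - 1) / 4 * b\<^sup>2 - a ^ 3 / 3)
          + exp (- ((n - 4) * t)) * dF) (at t within {0..})"
    unfolding lyapunov_def a_def b_def dF_def
    by (auto intro!: derivative_eq_intros has_real_derivative_W has_real_derivative_J assms
        simp: power2_eq_square)
  moreover have "exp (- ((n - 4) * t)) * (- ((n - 4) * 1)) * (n / 2 * a * b - (n - 1) / 4 * b\<^sup>2 - a ^ 3 / 3)
          + exp (- ((n - 4) * t)) * dF
      = exp (- ((n - 4) * t)) * (- (n - 4) * (n / 2 * a * b - (n - 1) / 4 * b\<^sup>2 - a ^ 3 / 3) + dF)"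
    by (simp add: distrib_left mult.assoc)
  moreover have "- (n - 4) * (n / 2 * a * b - (n - 1) / 4 * b\<^sup>2 - a ^ 3 / 3) + dF
      = - ((n - 4) / 6) * a ^ 3"
    unfolding dF_def by (simp add: field_simps power2_eq_square power3_eq_cube)
  ultimately show ?thesis
    unfolding a_def by (simp add: mult_ac)
qed

lemma lyapunov_antitone:
  assumes "0 \<le> s" "s \<le> t"
  shows "lyapunov t \<le> lyapunov s"
proof (rule has_real_derivative_nonpos_imp_antitone[OF has_real_derivative_lyapunov _ assms])
  fix x :: real assume "0 \<le> x"
  then have "0 \<le> W x"
    using w_nonneg by (simp add: W_def)
  then show "- ((n - 4) / 6) * exp (- ((n - 4) * x)) * (W x) ^ 3 \<le> 0"
    using n_ge_4 by simp
qed

lemma lyapunov_tendsto: "(lyapunov \<longlongrightarrow> 0) at_top"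
proof -
  let ?F = "\<lambda>t. n / 2 * W t * J t - (n - 1) / 4 * (J t)\<^sup>2 - (W t) ^ 3 / 3"
  have W_tendsto: "(W \<longlongrightarrow> 0) at_top"
    unfolding W_def using tendsto_mult[OF tendsto_exp_neg_at_top w_tendsto] by simp
  have F_tendsto: "(?F \<longlongrightarrow> 0) at_top"
    using W_tendsto J_tendsto by (auto intro!: tendsto_eq_intros)
  have "\<forall>\<^sub>F t in at_top. norm (lyapunov t) \<le> norm (?F t)"
    using eventually_ge_at_top[of 0]
  proof eventually_elim
    case (elim t)
    have "exp (- ((n - 4) * t)) \<le> 1"
      using n_ge_4 elim by simp
    then show ?case
      by (simp add: lyapunov_def abs_mult mult_left_le_one_le)
  qed
  from Lim_null_comparison[OF this tendsto_norm_zero[OF F_tendsto]] show ?thesis .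
qed

lemma lyapunov_0: "lyapunov 0 = - (w 0 ^ 3) / 3"
  using robin_boundary by (simp add: lyapunov_def W_def J_def robin_def)

lemma w_0_eq_0: "w 0 = 0"
proof -
  have "0 \<le> lyapunov 0"
    using antitone_tendsto_at_top_le[OF lyapunov_antitone lyapunov_tendsto] by simp
  then have "w 0 ^ 3 \<le> 0"
    by (simp add: lyapunov_0)
  then show ?thesis
    using w_nonneg[of 0] by (simp add: power_le_zero_eq)
qed

theorem w_eq_0: "0 \<le> t \<Longrightarrow> w t = 0"
  using w_eq_0_if_w_0_eq_0[OF w_0_eq_0] .

end

theorem theorem3p4:
  fixes N :: nat and w w' w'' :: "real \<Rightarrow> real"
  assumes hN: "N \<ge> 4"
    and hw': "\<And>t. t \<ge> 0 \<Longrightarrow> (w has_real_derivative w' t) (at t within {0..})"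
    and hw'': "\<And>t. t \<ge> 0 \<Longrightarrow> (w' has_real_derivative w'' t) (at t within {0..})"
    and hcont: "continuous_on {0..} w''"
    and heq: "\<And>t. t \<ge> 0 \<Longrightarrow>
       - w'' t + (real N - 2) * w' t + (real N - 1) * w t = (real N - 1) / 2 * exp (- t) * (w t)\<^sup>2"
    and hbc: "w' 0 - (real N - 1) * w 0 = 0"
    and hlim: "(w \<longlongrightarrow> 0) at_top"
  shows "\<forall>t\<ge>0. w t = 0"
proof -
  interpret radial_navier "real N" w w' w''
  proof
    show "\<And>t. 0 \<le> t \<Longrightarrow> w'' t = (real N - 2) * w' t + (real N - 1) * w t
        - (real N - 1) / 2 * exp (- t) * (w t)\<^sup>2"
      using heq by (simp add: field_simps)
  qed (use hN hw' hw'' hbc hlim in auto)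
  show ?thesis
    using w_eq_0 by blast
qed

end
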